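(* Let $\Gamma$ be a $\Bbbk$-algebra and $\sim$ an equivalence relation on $\mathrm{cfs}(\Gamma)$. If $V$ is a block module and $f:V\to W$ is a $\Gamma$-module map, then $f(V)\subseteq\bigoplus_{B\in\mathrm{Supp}(V)}W(B)$. If moreover $W$ is a block module, then $f=\bigoplus_{B\in\mathrm{cfs}(\Gamma)/{\sim}}f_B$ where $f_B=\pi_B\circ f\circ\iota_B:V(B)\to W(B)$.
   Context: $\mathrm{cfs}(\Gamma)$: maximal two-sided ideals $\mathfrak m$ of $\Gamma$ with $\dim\Gamma/\mathfrak m<\infty$. For a class $B$, $\mathcal W(B)=\{\mathfrak m_1\cdots\mathfrak m_k:k\ge0,\mathfrak m_i\in B\}$; for a $\Gamma$-module $V$, $V(B)=\{v:\mathfrak m v=0$ for some $\mathfrak m\in\mathcal W(B)\}$ (the sum of the $V(B)$ is direct). $V$ is a block module if $V=\bigoplus_BV(B)$, with projections $\pi_B$ and inclusions $\iota_B$; $\mathrm{Supp}(V)=\{B:V(B)\neq0\}$. *)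

theory Defs
  imports Complex_Main
begin

text \<open>A (unital, associative) k-algebra Gamma: the ring structure is the type class
  structure of 'g, the k-action is the scalar multiplication s.\<close>
definition kalgebra :: "('k::field \<Rightarrow> 'g::{ring,monoid_mult} \<Rightarrow> 'g) \<Rightarrow> bool" where
  "kalgebra s \<longleftrightarrow> vector_space s \<and>
     (\<forall>c x y. s c (x * y) = s c x * y \<and> s c (x * y) = x * s c y)"

definition two_sided_ideal :: "'g::{ring,monoid_mult} set \<Rightarrow> bool" where
  "two_sided_ideal I \<longleftrightarrow> 0 \<in> I \<and> (\<forall>x\<in>I. \<forall>y\<in>I. x + y \<in> I) \<and> (\<forall>x\<in>I. - x \<in> I)
     \<and> (\<forall>a x. x \<in> I \<longrightarrow> a * x \<in> I \<and> x * a \<in> I)"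

definition maximal_ideal :: "'g::{ring,monoid_mult} set \<Rightarrow> bool" where
  "maximal_ideal m \<longleftrightarrow> two_sided_ideal m \<and> m \<noteq> UNIV \<and>
     (\<forall>J. two_sided_ideal J \<and> m \<subseteq> J \<longrightarrow> J = m \<or> J = UNIV)"

text \<open>dim_k (Gamma / m) < infinity: Gamma is spanned over k by m together with finitely many
  elements (i.e. the quotient space is spanned by finitely many cosets).\<close>
definition finite_codim :: "('k::field \<Rightarrow> 'g::{ring,monoid_mult} \<Rightarrow> 'g) \<Rightarrow> 'g set \<Rightarrow> bool" where
  "finite_codim s m \<longleftrightarrow> (\<exists>F. finite F \<and> module.span s (F \<union> m) = UNIV)"

definition cfs :: "('k::field \<Rightarrow> 'g::{ring,monoid_mult} \<Rightarrow> 'g) \<Rightarrow> 'g set set" where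
  "cfs s = {m. maximal_ideal m \<and> finite_codim s m}"

definition ideal_mult :: "'g::{ring,monoid_mult} set \<Rightarrow> 'g set \<Rightarrow> 'g set" where
  "ideal_mult I J = {sum_list (map (\<lambda>(a, b). a * b) ps) | ps. set ps \<subseteq> I \<times> J}"

definition Wprod :: "'g::{ring,monoid_mult} set set \<Rightarrow> 'g set set" where
  "Wprod B = {foldr ideal_mult ms UNIV | ms. set ms \<subseteq> B}"

definition gmodule :: "('g::{ring,monoid_mult} \<Rightarrow> 'v::ab_group_add \<Rightarrow> 'v) \<Rightarrow> bool" where
  "gmodule act \<longleftrightarrow> (\<forall>a x y. act a (x + y) = act a x + act a y)
     \<and> (\<forall>a b x. act (a + b) x = act a x + act b x)
     \<and> (\<forall>a b x. act (a * b) x = act a (act b x))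
     \<and> (\<forall>x. act 1 x = x)"

definition gmodule_map ::
  "('g::{ring,monoid_mult} \<Rightarrow> 'v::ab_group_add \<Rightarrow> 'v) \<Rightarrow> ('g \<Rightarrow> 'w::ab_group_add \<Rightarrow> 'w)
     \<Rightarrow> ('v \<Rightarrow> 'w) \<Rightarrow> bool" where
  "gmodule_map actV actW f \<longleftrightarrow> (\<forall>x y. f (x + y) = f x + f y) \<and> (\<forall>a x. f (actV a x) = actW a (f x))"

definition Vpart :: "('g::{ring,monoid_mult} \<Rightarrow> 'v::ab_group_add \<Rightarrow> 'v) \<Rightarrow> 'g set set \<Rightarrow> 'v set" where
  "Vpart act B = {v. \<exists>m\<in>Wprod B. \<forall>x\<in>m. act x v = 0}"

definition is_decomp ::
  "('g::{ring,monoid_mult} \<Rightarrow> 'v::ab_group_add \<Rightarrow> 'v) \<Rightarrow> 'g set set set \<Rightarrow> ('g set set \<Rightarrow> 'v) \<Rightarrow> 'v \<Rightarrow> bool" where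
  "is_decomp act blocks g v \<longleftrightarrow> (\<forall>B. g B \<in> Vpart act B) \<and> finite {B. g B \<noteq> 0}
     \<and> {B. g B \<noteq> 0} \<subseteq> blocks \<and> v = sum g {B. g B \<noteq> 0}"

text \<open>V is a block module: V is the (internal, direct) sum of the V(B), B ranging over blocks.\<close>
definition block_module ::
  "('g::{ring,monoid_mult} \<Rightarrow> 'v::ab_group_add \<Rightarrow> 'v) \<Rightarrow> 'g set set set \<Rightarrow> bool" where
  "block_module act blocks \<longleftrightarrow> (\<forall>v. \<exists>!g. is_decomp act blocks g v)"

text \<open>The projection pi_B : V -> V(B) of a block module (the inclusion iota_B is the identity).\<close>
definition blk_proj ::
  "('g::{ring,monoid_mult} \<Rightarrow> 'v::ab_group_add \<Rightarrow> 'v) \<Rightarrow> 'g set set set \<Rightarrow> 'g set set \<Rightarrow> 'v \<Rightarrow> 'v" where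
  "blk_proj act blocks B v = (THE g. is_decomp act blocks g v) B"

definition Supp ::
  "('g::{ring,monoid_mult} \<Rightarrow> 'v::ab_group_add \<Rightarrow> 'v) \<Rightarrow> 'g set set set \<Rightarrow> 'g set set set" where
  "Supp act blocks = {B \<in> blocks. Vpart act B \<noteq> {0}}"

definition dsum_parts ::
  "('g::{ring,monoid_mult} \<Rightarrow> 'w::ab_group_add \<Rightarrow> 'w) \<Rightarrow> 'g set set set \<Rightarrow> 'w set" where
  "dsum_parts act S = {sum g F | F g. finite F \<and> F \<subseteq> S \<and> (\<forall>B\<in>F. g B \<in> Vpart act B)}"

end

theory Submission
  imports Defs
begin

text \<open>Neither the algebra structure nor the equivalence relation plays a role: the statement holds
  for an arbitrary family of blocks. A module map sends V(B) into W(B), since it commutes with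
  the action of an annihilating product ideal. Applying f to the block decomposition of v gives
  the first claim, and the second follows because the projection of a block module fixes W(B).\<close>

lemma gmodule_act_zero: "gmodule act \<Longrightarrow> act a 0 = 0"
  unfolding gmodule_def by (metis add_cancel_right_right)

lemma gmodule_map_zero: "gmodule_map actV actW f \<Longrightarrow> f 0 = 0"
  unfolding gmodule_map_def by (metis add_cancel_right_right)

lemma gmodule_map_sum:
  assumes "gmodule_map actV actW f"
  shows "f (sum g F) = (\<Sum>x\<in>F. f (g x))"
proof (induction F rule: infinite_finite_induct)
  case (insert x F)
  then show ?case using assms unfolding gmodule_map_def by simp
qed (simp_all add: gmodule_map_zero[OF assms])

lemma UNIV_in_Wprod: "UNIV \<in> Wprod B"
  unfolding Wprod_def by (auto intro: exI[of _ "[]"])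

lemma zero_in_Vpart: "gmodule act \<Longrightarrow> 0 \<in> Vpart act B"
  unfolding Vpart_def using UNIV_in_Wprod gmodule_act_zero by blast

lemma gmodule_map_Vpart:
  assumes f: "gmodule_map actV actW f" and v: "v \<in> Vpart actV B"
  shows "f v \<in> Vpart actW B"
proof -
  obtain m where m: "m \<in> Wprod B" and ann: "\<And>x. x \<in> m \<Longrightarrow> actV x v = 0"
    using v unfolding Vpart_def by blast
  have "actW x (f v) = 0" if "x \<in> m" for x
  proof -
    have "actW x (f v) = f (actV x v)" using f unfolding gmodule_map_def by simp
    also have "\<dots> = 0" using ann[OF that] gmodule_map_zero[OF f] by simp
    finally show ?thesis .
  qed
  then show ?thesis using m unfolding Vpart_def by blast
qed

lemma is_decomp_blk_proj:
  "block_module act blocks \<Longrightarrow> is_decomp act blocks (\<lambda>B. blk_proj act blocks B v) v"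
  unfolding blk_proj_def block_module_def by (metis theI')

lemma blk_proj_eq_self:
  assumes bm: "block_module act blocks" and "gmodule act" and "B \<in> blocks"
    and w: "w \<in> Vpart act B"
  shows "blk_proj act blocks B w = w"
proof -
  let ?g = "\<lambda>C. if C = B then w else 0"
  have "{C. ?g C \<noteq> 0} = (if w = 0 then {} else {B})" by auto
  then have "is_decomp act blocks ?g w"
    unfolding is_decomp_def using zero_in_Vpart assms by auto
  with is_decomp_blk_proj[OF bm] bm have "(\<lambda>C. blk_proj act blocks C w) = ?g"
    unfolding block_module_def by blast
  then show ?thesis by (metis (mono_tags, lifting))
qed

lemma block_decomposition:
  fixes v :: "'v::ab_group_add"
  assumes "block_module act blocks"
  defines "S \<equiv> {B \<in> blocks. blk_proj act blocks B v \<noteq> 0}"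
  shows "finite S" and "S \<subseteq> Supp act blocks"
    and "\<And>B. blk_proj act blocks B v \<in> Vpart act B"
    and "v = (\<Sum>B\<in>S. blk_proj act blocks B v)"
proof -
  have d: "is_decomp act blocks (\<lambda>B. blk_proj act blocks B v) v"
    by (rule is_decomp_blk_proj[OF assms(1)])
  then have S_eq: "S = {B. blk_proj act blocks B v \<noteq> 0}"
    unfolding S_def is_decomp_def by auto
  show "finite S" "\<And>B. blk_proj act blocks B v \<in> Vpart act B"
    "v = (\<Sum>B\<in>S. blk_proj act blocks B v)"
    using d unfolding S_eq is_decomp_def by auto
  show "S \<subseteq> Supp act blocks"
    using d unfolding S_def Supp_def is_decomp_def by fastforce
qed

lemma gmodule_map_block_sum:
  assumes "block_module actV blocks" and "gmodule_map actV actW f"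
  shows "f v = (\<Sum>B\<in>{B \<in> blocks. blk_proj actV blocks B v \<noteq> 0}. f (blk_proj actV blocks B v))"
  using block_decomposition(4)[OF assms(1)] gmodule_map_sum[OF assms(2)] by metis

lemma gmodule_map_image_dsum_parts:
  assumes "block_module actV blocks" and "gmodule_map actV actW f"
  shows "f v \<in> dsum_parts actW (Supp actV blocks)"
  unfolding dsum_parts_def
  using gmodule_map_block_sum[OF assms] block_decomposition(1-3)[OF assms(1)]
    gmodule_map_Vpart[OF assms(2)] by blast

lemma gmodule_map_eq_sum_blk_proj:
  assumes "block_module actV blocks" and "gmodule_map actV actW f"
    and "block_module actW blocks" and "gmodule actW"
  shows "f v = (\<Sum>B\<in>{B \<in> blocks. blk_proj actV blocks B v \<noteq> 0}.
                 blk_proj actW blocks B (f (blk_proj actV blocks B v)))"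
  unfolding gmodule_map_block_sum[OF assms(1,2), of v]
proof (rule sum.cong[OF refl])
  fix B assume "B \<in> {B \<in> blocks. blk_proj actV blocks B v \<noteq> 0}"
  then show "f (blk_proj actV blocks B v) = blk_proj actW blocks B (f (blk_proj actV blocks B v))"
    using blk_proj_eq_self[OF assms(3,4)] gmodule_map_Vpart[OF assms(2)]
      block_decomposition(3)[OF assms(1)] by simp
qed

theorem mainTheorem6:
  fixes s :: "'k::field \<Rightarrow> 'g::{ring,monoid_mult} \<Rightarrow> 'g"
    and R :: "('g set \<times> 'g set) set"
    and actV :: "'g \<Rightarrow> 'v::ab_group_add \<Rightarrow> 'v"
    and actW :: "'g \<Rightarrow> 'w::ab_group_add \<Rightarrow> 'w"
    and f :: "'v \<Rightarrow> 'w"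
  assumes "kalgebra s"
    and "equiv (cfs s) R"
    and "gmodule actV" and "gmodule actW"
    and "block_module actV (cfs s // R)"
    and "gmodule_map actV actW f"
  shows "(\<forall>v. f v \<in> dsum_parts actW (Supp actV (cfs s // R)))
    \<and> (block_module actW (cfs s // R) \<longrightarrow>
        (\<forall>v. f v = (\<Sum>B\<in>{B \<in> cfs s // R. blk_proj actV (cfs s // R) B v \<noteq> 0}.
                     blk_proj actW (cfs s // R) B (f (blk_proj actV (cfs s // R) B v)))))"
  using gmodule_map_image_dsum_parts[OF assms(5,6)]
    gmodule_map_eq_sum_blk_proj[OF assms(5,6) _ assms(4)] by blast

end
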